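(* Fix block sizes $k_1,\dots,k_p$ with $m=\sum_ik_i$, $\sigma^2>0$ and $\bar\theta=[\bar\theta^{(1)\top},\dots,\bar\theta^{(p)\top}]^\top\in\mathbb{R}^m$. For each $n\ge m$ let $G_n=[G_n^{(1)},\dots,G_n^{(p)}]\in\mathbb{R}^{n\times m}$ with $G_n^{(i)}\in\mathbb{R}^{n\times k_i}$ and $G_n^\top G_n=nI_m$, and let $y=G_n\bar\theta+v$ with $v\sim\mathcal N(0,\sigma^2I_n)$. Let $\hat\theta_{LS}^{(i)}=\frac1n(G_n^{(i)})^\top y$, and define $$\hat\lambda_i^*:=\frac{\|\hat\theta_{LS}^{(i)}\|^2}{k_i}-\frac{\sigma^2}{n},\qquad \hat\lambda_i(0):=\max(0,\hat\lambda_i^* ),\qquad \lambda_i^{opt}:=\frac{\|\bar\theta^{(i)}\|^2}{k_i}.$$ Then $\hat\lambda^*=(\hat\lambda_1^*,\dots,\hat\lambda_p^* )$ is an unbiased and mean-square consistent estimator of $\lambda^{opt}$, while $\hat\lambda(0)=(\hat\lambda_1(0),\dots,\hat\lambda_p(0))$ is asymptotically unbiased and consistent: $$\mathbb{E}[\hat\lambda_i^*\mid\theta=\bar\theta]=\lambda_i^{opt},\qquad \lim_{n\to\infty}\mathbb{E}[\hat\lambda_i(0)\mid\theta=\bar\theta]=\lambda_i^{opt},$$ and $\hat\lambda_i^*\to\lambda_i^{opt}$ and $\hat\lambda_i(0)\to\lambda_i^{opt}$ in mean square as $n\to\infty$, for each $i$.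
   Context: $\lambda^{opt}$ is the minimizer of the mean squared error $\mathrm{tr}\,\mathbb{E}_v[(\hat\theta(\lambda)-\bar\theta)(\hat\theta(\lambda)-\bar\theta)^\top]$ of the Bayes estimator $\hat\theta(\lambda)=\Lambda G_n^\top(G_n\Lambda G_n^\top+\sigma^2I)^{-1}y$, $\Lambda=\mathrm{blockdiag}(\lambda_iI_{k_i})$, when $G_n^\top G_n=nI$. $\hat\lambda(0)$ is the limit as $\gamma\to0$ of the maximizer of the marginal posterior of $\lambda$ in the hierarchical model with exponential($\gamma$) prior on each $\lambda_i$ and $\theta^{(i)}\mid\lambda_i\sim\mathcal N(0,\lambda_iI_{k_i})$. Conditioning on $\theta=\bar\theta$ means the only randomness is the noise $v$. *)

theory Defs
  imports "HOL-Probability.Probability"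
begin

text \<open>Noise model: v = (v_0,...,v_{n-1}) with i.i.d. N(0, sigma2) entries,
  i.e. v ~ N(0, sigma2 I_n), realised as a finite product measure.
  normal_density takes the standard deviation, hence sqrt sigma2.\<close>
definition noise :: "real \<Rightarrow> nat \<Rightarrow> (nat \<Rightarrow> real) measure" where
  "noise sigma2 n = PiM {..<n} (\<lambda>_. density lborel (normal_density 0 (sqrt sigma2)))"

definition blk_off :: "(nat \<Rightarrow> nat) \<Rightarrow> nat \<Rightarrow> nat" where
  "blk_off k i = (\<Sum>j<i. k j)"

definition blk :: "(nat \<Rightarrow> nat) \<Rightarrow> nat \<Rightarrow> nat set" where
  "blk k i = {blk_off k i ..< blk_off k i + k i}"

text \<open>Output y = G_n thetabar + v; G n j c is entry (j,c) of G_n (j < n, c < m).\<close>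
definition yobs :: "(nat \<Rightarrow> nat \<Rightarrow> nat \<Rightarrow> real) \<Rightarrow> nat \<Rightarrow> (nat \<Rightarrow> real) \<Rightarrow> nat
    \<Rightarrow> (nat \<Rightarrow> real) \<Rightarrow> nat \<Rightarrow> real" where
  "yobs G m thbar n v j = (\<Sum>c<m. G n j c * thbar c) + v j"

definition theta_LS :: "(nat \<Rightarrow> nat \<Rightarrow> nat \<Rightarrow> real) \<Rightarrow> nat \<Rightarrow> (nat \<Rightarrow> real) \<Rightarrow> nat
    \<Rightarrow> (nat \<Rightarrow> real) \<Rightarrow> nat \<Rightarrow> real" where
  "theta_LS G m thbar n v c = (1 / real n) * (\<Sum>j<n. G n j c * yobs G m thbar n v j)"

definition lambda_star :: "(nat \<Rightarrow> nat) \<Rightarrow> real \<Rightarrow> (nat \<Rightarrow> nat \<Rightarrow> nat \<Rightarrow> real) \<Rightarrow> nat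
    \<Rightarrow> (nat \<Rightarrow> real) \<Rightarrow> nat \<Rightarrow> nat \<Rightarrow> (nat \<Rightarrow> real) \<Rightarrow> real" where
  "lambda_star k sigma2 G m thbar i n v =
     (\<Sum>c\<in>blk k i. (theta_LS G m thbar n v c)\<^sup>2) / real (k i) - sigma2 / real n"

definition lambda_hat0 :: "(nat \<Rightarrow> nat) \<Rightarrow> real \<Rightarrow> (nat \<Rightarrow> nat \<Rightarrow> nat \<Rightarrow> real) \<Rightarrow> nat
    \<Rightarrow> (nat \<Rightarrow> real) \<Rightarrow> nat \<Rightarrow> nat \<Rightarrow> (nat \<Rightarrow> real) \<Rightarrow> real" where
  "lambda_hat0 k sigma2 G m thbar i n v = max 0 (lambda_star k sigma2 G m thbar i n v)"

definition lambda_opt :: "(nat \<Rightarrow> nat) \<Rightarrow> (nat \<Rightarrow> real) \<Rightarrow> nat \<Rightarrow> real" where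
  "lambda_opt k thbar i = (\<Sum>c\<in>blk k i. (thbar c)\<^sup>2) / real (k i)"

end

theory Submission
  imports Defs
begin

text \<open>With an orthonormal design, each coordinate c of the least-squares estimate in block i is
  thbar c plus a centred Gaussian error of variance sigma2/n. Hence the mean of the squared block
  norm exceeds that of thbar by k i * sigma2/n, which makes lambda_star unbiased. Its deviation from
  lambda_opt is 2<thbar,w>/k + |w|^2/k - sigma2/n; Cauchy-Schwarz and the Gaussian fourth moment
  bound its second moment by O(1/n). Clipping at 0 can only move lambda_star closer to the
  nonnegative target lambda_opt, so lambda_hat0 inherits this bound, and its bias is controlled
  by (E X)^2 <= E X^2.\<close>

lemma prob_space_noise: "0 < s2 \<Longrightarrow> prob_space (noise s2 n)"
  unfolding noise_def by (rule prob_space_PiM) (rule prob_space_normal_density, simp)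

lemma measurable_noise_component:
  "j < n \<Longrightarrow> (\<lambda>v. v j) \<in> measurable (noise s2 n) (density lborel (normal_density 0 (sqrt s2)))"
  unfolding noise_def by (rule measurable_component_singleton) simp

lemma distributed_noise_component:
  assumes "j < n" "0 < s2"
  shows "distributed (noise s2 n) lborel (\<lambda>v. v j) (normal_density 0 (sqrt s2))"
proof -
  let ?N = "density lborel (normal_density 0 (sqrt s2))"
  have meas: "(\<lambda>v. v j) \<in> measurable (noise s2 n) ?N"
    using assms(1) by (rule measurable_noise_component)
  have "distr (noise s2 n) lborel (\<lambda>v. v j) = distr (noise s2 n) ?N (\<lambda>v. v j)"
    by (rule distr_cong) auto
  also have "\<dots> = ?N"
    unfolding noise_def using assms by (intro distr_PiM_component prob_space_normal_density) auto
  finally show ?thesis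
    using meas unfolding distributed_def by (simp cong: measurable_cong_sets)
qed

lemma indep_vars_noise_components:
  assumes "I \<subseteq> {..<n}" "I \<noteq> {}" "0 < s2"
  shows "prob_space.indep_vars (noise s2 n) (\<lambda>_. density lborel (normal_density 0 (sqrt s2)))
           (\<lambda>j v. v j) I"
proof -
  let ?N = "density lborel (normal_density 0 (sqrt s2))"
  interpret P: prob_space "noise s2 n" using assms(3) by (rule prob_space_noise)
  interpret PP: product_prob_space "\<lambda>_. ?N"
    by (rule product_prob_spaceI) (rule prob_space_normal_density, simp add: assms)
  show ?thesis
  proof (subst P.indep_vars_iff_distr_eq_PiM')
    fix i assume "i \<in> I"
    with assms(1) have "i < n" by auto
    then show "(\<lambda>v. v i) \<in> measurable (noise s2 n) ?N"
      by (rule measurable_noise_component)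
  next
    have "distr (noise s2 n) (PiM I (\<lambda>_. ?N)) (\<lambda>x. \<lambda>i\<in>I. x i) = PiM I (\<lambda>_. ?N)"
      unfolding noise_def using PP.distr_restrict[of I "{..<n}"] assms by (simp add: restrict_def)
    moreover have "PiM I (\<lambda>i. distr (noise s2 n) ?N (\<lambda>x. x i)) = PiM I (\<lambda>_. ?N)"
      unfolding noise_def using assms
      by (intro PiM_cong refl distr_PiM_component prob_space_normal_density) auto
    ultimately show "distr (noise s2 n) (PiM I (\<lambda>_. ?N)) (\<lambda>x. \<lambda>i\<in>I. x i)
        = PiM I (\<lambda>i. distr (noise s2 n) ?N (\<lambda>x. x i))"
      by simp
  qed (use assms in auto)
qed

lemma distributed_noise_lincomb:
  assumes s2: "0 < s2" and a_nz: "0 < (\<Sum>j<n. (a j)\<^sup>2)"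
  shows "distributed (noise s2 n) lborel (\<lambda>v. \<Sum>j<n. a j * v j)
           (normal_density 0 (sqrt (s2 * (\<Sum>j<n. (a j)\<^sup>2))))"
proof -
  interpret P: prob_space "noise s2 n" using s2 by (rule prob_space_noise)
  \<comment> \<open>\<open>sum_indep_normal\<close> needs positive standard deviations, so zero coefficients are dropped\<close>
  define I where "I = {j. j < n \<and> a j \<noteq> 0}"
  have I_sub: "I \<subseteq> {..<n}" by (auto simp: I_def)
  have sum_I: "(\<Sum>j<n. f j) = (\<Sum>j\<in>I. f j)" if "\<And>j. a j = 0 \<Longrightarrow> f j = 0" for f :: "nat \<Rightarrow> real"
    by (rule sum.mono_neutral_right) (auto simp: I_def that)
  have I_ne: "I \<noteq> {}"
    using a_nz sum_I[of "\<lambda>j. (a j)\<^sup>2"] by auto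
  have "P.indep_vars (\<lambda>_. density lborel (normal_density 0 (sqrt s2))) (\<lambda>j v. v j) I"
    using I_sub I_ne s2 by (rule indep_vars_noise_components)
  then have indep: "P.indep_vars (\<lambda>_. borel) (\<lambda>j v. a j * v j) I"
    by (rule P.indep_vars_compose2[where Y="\<lambda>j x. a j * x"]) simp
  have summand: "distributed (noise s2 n) lborel (\<lambda>v. a j * v j) (normal_density 0 (\<bar>a j\<bar> * sqrt s2))"
    if "j \<in> I" for j
  proof -
    have "j < n" "a j \<noteq> 0" using that by (auto simp: I_def)
    from P.normal_density_affine[OF distributed_noise_component[OF \<open>j < n\<close> s2] _ \<open>a j \<noteq> 0\<close>, of 0] s2
    show ?thesis by simp
  qed
  have "distributed (noise s2 n) lborel (\<lambda>v. \<Sum>j\<in>I. a j * v j)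
      (normal_density (\<Sum>j\<in>I. 0) (sqrt (\<Sum>j\<in>I. (\<bar>a j\<bar> * sqrt s2)\<^sup>2)))"
    by (rule P.sum_indep_normal[OF _ I_ne indep _ summand]) (use s2 in \<open>auto simp: I_def\<close>)
  moreover have "(\<lambda>v. \<Sum>j\<in>I. a j * v j) = (\<lambda>v. \<Sum>j<n. a j * v j)"
    by (rule ext, rule sum_I[symmetric]) simp
  moreover have "(\<Sum>j\<in>I. (\<bar>a j\<bar> * sqrt s2)\<^sup>2) = s2 * (\<Sum>j<n. (a j)\<^sup>2)"
    using s2 by (simp add: sum_I[of "\<lambda>j. (a j)\<^sup>2"] power_mult_distrib sum_distrib_left mult.commute)
  ultimately show ?thesis by simp
qed

lemma distributed_normal_moments:
  assumes D: "distributed M lborel Y (normal_density 0 t)" and t: "0 < t"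
  shows "integrable M (\<lambda>x. (Y x) ^ k)"
    and "(\<integral>x. Y x \<partial>M) = 0"
    and "(\<integral>x. (Y x)\<^sup>2 \<partial>M) = t\<^sup>2"
    and "(\<integral>x. (Y x) ^ 4 \<partial>M) = 3 * t ^ 4"
proof -
  have moment: "(\<integral>x. Y x ^ k \<partial>M) = (\<integral>x. normal_density 0 t x * x ^ k \<partial>lborel)" for k
    by (subst distributed_integral[OF D, symmetric]) auto
  show "integrable M (\<lambda>x. (Y x) ^ k)"
    using distributed_integrable[OF D, of "\<lambda>x. x ^ k"] integrable_normal_moment[of t 0 k] t by simp
  show "(\<integral>x. Y x \<partial>M) = 0"
    using moment[of 1] integral_normal_moment_odd[of t 0 0] t by simp
  show "(\<integral>x. (Y x)\<^sup>2 \<partial>M) = t\<^sup>2"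
    using moment[of 2] integral_normal_moment_even[of t 0 1] t by simp
  show "(\<integral>x. (Y x) ^ 4 \<partial>M) = 3 * t ^ 4"
    using moment[of 4] integral_normal_moment_even[of t 0 2] t
    by (simp add: fact_numeral numeral_eq_Suc)
qed

lemma power2_sum3_le: "((a::real) + b + c)\<^sup>2 \<le> 3 * (a\<^sup>2 + b\<^sup>2 + c\<^sup>2)"
proof -
  have "0 \<le> (a - b)\<^sup>2 + (b - c)\<^sup>2 + (a - c)\<^sup>2" by simp
  then show ?thesis by (simp add: power2_eq_square algebra_simps)
qed

lemma power2_max0_diff_le: "0 \<le> (a::real) \<Longrightarrow> (max 0 x - a)\<^sup>2 \<le> (x - a)\<^sup>2"
proof (cases "0 \<le> x")
  case False
  assume "0 \<le> a"
  then have "0 \<le> x * (x - 2 * a)" using False by (intro mult_nonpos_nonpos) auto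
  then show ?thesis using False by (simp add: power2_eq_square algebra_simps)
qed simp

lemma power2_sq_sum_deviation_le:
  fixes \<theta> w :: "'b \<Rightarrow> real"
  assumes B: "finite B" "B \<noteq> {}"
  defines "K \<equiv> real (card B)" and "S \<equiv> \<Sum>c\<in>B. (\<theta> c)\<^sup>2"
  shows "((\<Sum>c\<in>B. (\<theta> c + w c)\<^sup>2) / K - t\<^sup>2 - S / K)\<^sup>2
    \<le> 3 * (4 * S * (\<Sum>c\<in>B. (w c)\<^sup>2) / K\<^sup>2 + (\<Sum>c\<in>B. (w c) ^ 4) / K + t ^ 4)"
proof -
  define X where "X = (\<Sum>c\<in>B. \<theta> c * w c)"
  define Y where "Y = (\<Sum>c\<in>B. (w c)\<^sup>2)"
  have K: "0 < K" using B by (simp add: K_def card_gt_0_iff)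
  have "(\<Sum>c\<in>B. (\<theta> c + w c)\<^sup>2) = S + 2 * X + Y"
    by (simp add: power2_sum sum.distrib S_def X_def Y_def sum_distrib_left mult.assoc)
  then have dev: "(\<Sum>c\<in>B. (\<theta> c + w c)\<^sup>2) / K - t\<^sup>2 - S / K = 2 * X / K + Y / K + - t\<^sup>2"
    using K by (simp add: field_simps)
  have "(2 * X / K)\<^sup>2 = 4 * X\<^sup>2 / K\<^sup>2"
    by (simp add: power_divide power_mult_distrib)
  also have "\<dots> \<le> 4 * (S * Y) / K\<^sup>2"
    using Cauchy_Schwarz_ineq_sum[of \<theta> w B] unfolding X_def S_def Y_def
    by (intro divide_right_mono) auto
  finally have X_le: "(2 * X / K)\<^sup>2 \<le> 4 * S * Y / K\<^sup>2" by simp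
  have "Y\<^sup>2 = (\<Sum>c\<in>B. 1 * (w c)\<^sup>2)\<^sup>2" by (simp add: Y_def)
  also have "\<dots> \<le> (\<Sum>c\<in>B. 1\<^sup>2) * (\<Sum>c\<in>B. ((w c)\<^sup>2)\<^sup>2)" by (rule Cauchy_Schwarz_ineq_sum)
  finally have "Y\<^sup>2 \<le> K * (\<Sum>c\<in>B. (w c) ^ 4)"
    by (simp add: K_def flip: power_mult)
  then have Y_le: "(Y / K)\<^sup>2 \<le> (\<Sum>c\<in>B. (w c) ^ 4) / K"
    using K by (simp add: power_divide power2_eq_square field_simps)
  have "(2 * X / K + Y / K + - t\<^sup>2)\<^sup>2 \<le> 3 * ((2 * X / K)\<^sup>2 + (Y / K)\<^sup>2 + (- t\<^sup>2)\<^sup>2)"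
    by (rule power2_sum3_le)
  also have "\<dots> \<le> 3 * (4 * S * Y / K\<^sup>2 + (\<Sum>c\<in>B. (w c) ^ 4) / K + t ^ 4)"
    using X_le Y_le by (simp flip: power_mult)
  finally show ?thesis unfolding dev Y_def .
qed

context prob_space
begin

lemma power2_expectation_le:
  fixes X :: "'a \<Rightarrow> real"
  assumes "X \<in> borel_measurable M" "integrable M (\<lambda>x. (X x)\<^sup>2)"
  shows "(expectation X)\<^sup>2 \<le> expectation (\<lambda>x. (X x)\<^sup>2)"
  using variance_positive[of X] variance_eq[OF square_integrable_imp_integrable[OF assms] assms(2)]
  by simp

lemma clipped_mse_le:
  fixes f :: "'a \<Rightarrow> real"
  assumes f: "integrable M f" and f_mse: "integrable M (\<lambda>x. (f x - a)\<^sup>2)" and a: "0 \<le> a"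
  shows "integrable M (\<lambda>x. max 0 (f x))"
    and "integrable M (\<lambda>x. (max 0 (f x) - a)\<^sup>2)"
    and "expectation (\<lambda>x. (max 0 (f x) - a)\<^sup>2) \<le> expectation (\<lambda>x. (f x - a)\<^sup>2)"
proof -
  have [measurable]: "f \<in> borel_measurable M" using f by (rule borel_measurable_integrable)
  show "integrable M (\<lambda>x. max 0 (f x))"
    by (rule Bochner_Integration.integrable_bound[OF f]) auto
  show int: "integrable M (\<lambda>x. (max 0 (f x) - a)\<^sup>2)"
    by (rule Bochner_Integration.integrable_bound[OF f_mse])
       (use power2_max0_diff_le[OF a] in \<open>auto simp del: power2_abs\<close>)
  show "expectation (\<lambda>x. (max 0 (f x) - a)\<^sup>2) \<le> expectation (\<lambda>x. (f x - a)\<^sup>2)"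
    using int f_mse power2_max0_diff_le[OF a] by (intro integral_mono) auto
qed

lemma shifted_gaussian_sq_sum:
  fixes \<theta> :: "'b \<Rightarrow> real" and w :: "'b \<Rightarrow> 'a \<Rightarrow> real" and t :: real
  assumes t: "0 < t"
    and w: "\<And>c. c \<in> B \<Longrightarrow> distributed M lborel (w c) (normal_density 0 t)"
  shows "integrable M (\<lambda>x. \<Sum>c\<in>B. (\<theta> c + w c x)\<^sup>2)"
    and "expectation (\<lambda>x. \<Sum>c\<in>B. (\<theta> c + w c x)\<^sup>2) = (\<Sum>c\<in>B. (\<theta> c)\<^sup>2) + card B * t\<^sup>2"
proof -
  note moments = distributed_normal_moments[OF w t]
  have expand: "(\<theta> c + w c x)\<^sup>2 = (\<theta> c)\<^sup>2 + 2 * \<theta> c * w c x + (w c x)\<^sup>2" for c x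
    by (simp add: power2_sum)
  have int: "integrable M (\<lambda>x. (\<theta> c + w c x)\<^sup>2)" if "c \<in> B" for c
    unfolding expand using moments(1)[OF that, of 1] moments(1)[OF that, of 2] by auto
  have E: "expectation (\<lambda>x. (\<theta> c + w c x)\<^sup>2) = (\<theta> c)\<^sup>2 + t\<^sup>2" if "c \<in> B" for c
    unfolding expand using moments[OF that] moments(1)[OF that, of 1] by (simp add: prob_space)
  show "integrable M (\<lambda>x. \<Sum>c\<in>B. (\<theta> c + w c x)\<^sup>2)" using int by auto
  show "expectation (\<lambda>x. \<Sum>c\<in>B. (\<theta> c + w c x)\<^sup>2) = (\<Sum>c\<in>B. (\<theta> c)\<^sup>2) + card B * t\<^sup>2"
    using int E by (simp add: integral_sum sum.distrib)
qed

lemma shifted_gaussian_sq_sum_mse: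
  fixes \<theta> :: "'b \<Rightarrow> real" and w :: "'b \<Rightarrow> 'a \<Rightarrow> real" and t :: real
  assumes B: "finite B" "B \<noteq> {}" and t: "0 < t"
    and w: "\<And>c. c \<in> B \<Longrightarrow> distributed M lborel (w c) (normal_density 0 t)"
  defines "K \<equiv> real (card B)" and "S \<equiv> \<Sum>c\<in>B. (\<theta> c)\<^sup>2"
  defines "D \<equiv> \<lambda>x. (\<Sum>c\<in>B. (\<theta> c + w c x)\<^sup>2) / K - t\<^sup>2 - S / K"
  shows "integrable M (\<lambda>x. (D x)\<^sup>2)"
    and "expectation (\<lambda>x. (D x)\<^sup>2) \<le> 12 * S * t\<^sup>2 / K + 12 * t ^ 4"
proof -
  note moments = distributed_normal_moments[OF w t]
  define R where "R = (\<lambda>x. 3 * (4 * S * (\<Sum>c\<in>B. (w c x)\<^sup>2) / K\<^sup>2 + (\<Sum>c\<in>B. (w c x) ^ 4) / K + t ^ 4))"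
  have K: "0 < K" using B by (simp add: K_def card_gt_0_iff)
  have [measurable]: "w c \<in> borel_measurable M" if "c \<in> B" for c
    using distributed_measurable[OF w[OF that]] by simp
  have D_le: "(D x)\<^sup>2 \<le> R x" for x
    unfolding D_def R_def K_def S_def using B by (rule power2_sq_sum_deviation_le)
  have R_int: "integrable M R"
    unfolding R_def using moments(1) by auto
  have "expectation R = 3 * (4 * S * (K * t\<^sup>2) / K\<^sup>2 + K * (3 * t ^ 4) / K + t ^ 4)"
    unfolding R_def using moments by (simp add: integral_sum prob_space K_def)
  also have "\<dots> = 12 * S * t\<^sup>2 / K + 12 * t ^ 4"
    using K by (simp add: field_simps power2_eq_square)
  finally have E_R: "expectation R = 12 * S * t\<^sup>2 / K + 12 * t ^ 4" .
  have D_meas: "D \<in> borel_measurable M"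
    unfolding D_def using B by measurable
  show D_int: "integrable M (\<lambda>x. (D x)\<^sup>2)"
    by (rule Bochner_Integration.integrable_bound[OF R_int])
       (use D_meas D_le in \<open>auto intro: order_trans[OF _ abs_ge_self] simp del: power2_abs\<close>)
  show "expectation (\<lambda>x. (D x)\<^sup>2) \<le> 12 * S * t\<^sup>2 / K + 12 * t ^ 4"
    unfolding E_R[symmetric] using D_int R_int D_le by (intro integral_mono) auto
qed

end

definition ls_error :: "(nat \<Rightarrow> nat \<Rightarrow> nat \<Rightarrow> real) \<Rightarrow> nat \<Rightarrow> nat \<Rightarrow> (nat \<Rightarrow> real) \<Rightarrow> real" where
  "ls_error G n c v = (\<Sum>j<n. G n j c / real n * v j)"

lemma theta_LS_eq_ls_error:
  assumes orth: "\<And>c'. c' < m \<Longrightarrow> (\<Sum>j<n. G n j c * G n j c') = (if c = c' then real n else 0)"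
    and c: "c < m" and n: "0 < n"
  shows "theta_LS G m thbar n v c = thbar c + ls_error G n c v"
proof -
  have "(\<Sum>j<n. \<Sum>c'<m. G n j c * G n j c' * thbar c') = (\<Sum>c'<m. thbar c' * (\<Sum>j<n. G n j c * G n j c'))"
    by (subst sum.swap) (simp add: sum_distrib_left mult_ac)
  also have "\<dots> = (\<Sum>c'<m. if c = c' then thbar c' * real n else 0)"
    using orth by (intro sum.cong) auto
  also have "\<dots> = thbar c * real n"
    using c by simp
  finally have "(\<Sum>j<n. G n j c * yobs G m thbar n v j) = thbar c * real n + (\<Sum>j<n. G n j c * v j)"
    by (simp add: yobs_def distrib_left sum.distrib sum_distrib_left mult.assoc)
  then show ?thesis
    using n by (simp add: theta_LS_def ls_error_def field_simps sum_divide_distrib[symmetric])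
qed

lemma distributed_ls_error:
  assumes s2: "0 < s2" and n: "0 < n" and norm: "(\<Sum>j<n. G n j c * G n j c) = real n"
  shows "distributed (noise s2 n) lborel (ls_error G n c) (normal_density 0 (sqrt (s2 / real n)))"
proof -
  have sq: "(\<Sum>j<n. (G n j c / real n)\<^sup>2) = 1 / real n"
    using norm n by (simp add: power_divide power2_eq_square flip: sum_divide_distrib)
  have "distributed (noise s2 n) lborel (\<lambda>v. \<Sum>j<n. G n j c / real n * v j)
      (normal_density 0 (sqrt (s2 * (\<Sum>j<n. (G n j c / real n)\<^sup>2))))"
    using s2 n sq by (intro distributed_noise_lincomb) auto
  then show ?thesis
    unfolding sq by (simp add: ls_error_def[abs_def])
qed

lemma blk_subset_lessThan: "i < p \<Longrightarrow> blk k i \<subseteq> {..<(\<Sum>i<p. k i)}"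
proof -
  assume "i < p"
  then have "blk_off k i + k i \<le> (\<Sum>j<p. k j)"
    using sum_mono2[of "{..<p}" "{..<Suc i}" k] by (simp add: blk_off_def)
  then show ?thesis by (auto simp: blk_def)
qed

lemma lambda_star_eq:
  assumes blk: "blk k i \<subseteq> {..<m}" and n: "0 < n"
    and orth: "\<And>c c'. c < m \<Longrightarrow> c' < m \<Longrightarrow>
                 (\<Sum>j<n. G n j c * G n j c') = (if c = c' then real n else 0)"
  shows "lambda_star k s2 G m thbar i n v
    = (\<Sum>c\<in>blk k i. (thbar c + ls_error G n c v)\<^sup>2) / real (k i) - s2 / real n"
proof -
  have "theta_LS G m thbar n v c = thbar c + ls_error G n c v" if "c \<in> blk k i" for c
    using that blk n orth by (intro theta_LS_eq_ls_error) auto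
  then show ?thesis by (simp add: lambda_star_def)
qed

lemma lambda_star_moments:
  fixes thbar :: "nat \<Rightarrow> real"
  assumes k: "0 < k i" and blk: "blk k i \<subseteq> {..<m}" and s2: "0 < s2" and n: "0 < n"
    and orth: "\<And>c c'. c < m \<Longrightarrow> c' < m \<Longrightarrow>
                 (\<Sum>j<n. G n j c * G n j c') = (if c = c' then real n else 0)"
  defines "L \<equiv> lambda_star k s2 G m thbar i n" and "a \<equiv> lambda_opt k thbar i"
    and "C \<equiv> 12 * (\<Sum>c\<in>blk k i. (thbar c)\<^sup>2) * s2 / (real (k i) * real n) + 12 * s2\<^sup>2 / (real n)\<^sup>2"
  shows "integrable (noise s2 n) L"
    and "(\<integral>v. L v \<partial>noise s2 n) = a"
    and "integrable (noise s2 n) (\<lambda>v. (L v - a)\<^sup>2)"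
    and "(\<integral>v. (L v - a)\<^sup>2 \<partial>noise s2 n) \<le> C"
proof -
  interpret prob_space "noise s2 n" using s2 by (rule prob_space_noise)
  define t where "t = sqrt (s2 / real n)"
  have t: "0 < t" and t2: "t\<^sup>2 = s2 / real n"
    using s2 n by (simp_all add: t_def)
  have w: "distributed (noise s2 n) lborel (ls_error G n c) (normal_density 0 t)" if "c \<in> blk k i" for c
    unfolding t_def using that blk s2 n orth by (intro distributed_ls_error) auto
  have B: "finite (blk k i)" "blk k i \<noteq> {}" and card: "card (blk k i) = k i"
    using k by (auto simp: blk_def)
  have L: "L = (\<lambda>v. (\<Sum>c\<in>blk k i. (thbar c + ls_error G n c v)\<^sup>2) / real (k i) - t\<^sup>2)"
    unfolding L_def t2 using blk n orth by (intro ext lambda_star_eq) auto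
  have a: "a = (\<Sum>c\<in>blk k i. (thbar c)\<^sup>2) / real (k i)"
    by (simp add: a_def lambda_opt_def)
  note sq_sum = shifted_gaussian_sq_sum[of t "blk k i" "ls_error G n" thbar, OF t w]
  show "integrable (noise s2 n) L"
    unfolding L using sq_sum(1) by simp
  show "(\<integral>v. L v \<partial>noise s2 n) = a"
    unfolding L a using sq_sum k by (simp add: card prob_space field_simps)
  note mse = shifted_gaussian_sq_sum_mse[of "blk k i" t "ls_error G n" thbar, OF B t w]
  show "integrable (noise s2 n) (\<lambda>v. (L v - a)\<^sup>2)"
    using mse(1) unfolding L a card by simp
  have "t ^ 4 = (s2 / real n)\<^sup>2"
    by (simp flip: t2 power_mult)
  then have "12 * (\<Sum>c\<in>blk k i. (thbar c)\<^sup>2) * t\<^sup>2 / real (k i) + 12 * t ^ 4 = C"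
    unfolding C_def t2 by (simp add: power_divide mult.commute)
  with mse(2) show "(\<integral>v. (L v - a)\<^sup>2 \<partial>noise s2 n) \<le> C"
    unfolding L a card by simp
qed

lemma lambda_hat0_moments:
  fixes thbar :: "nat \<Rightarrow> real"
  assumes k: "0 < k i" and blk: "blk k i \<subseteq> {..<m}" and s2: "0 < s2" and n: "0 < n"
    and orth: "\<And>c c'. c < m \<Longrightarrow> c' < m \<Longrightarrow>
                 (\<Sum>j<n. G n j c * G n j c') = (if c = c' then real n else 0)"
  defines "H \<equiv> lambda_hat0 k s2 G m thbar i n" and "a \<equiv> lambda_opt k thbar i"
    and "C \<equiv> 12 * (\<Sum>c\<in>blk k i. (thbar c)\<^sup>2) * s2 / (real (k i) * real n) + 12 * s2\<^sup>2 / (real n)\<^sup>2"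
  shows "integrable (noise s2 n) H"
    and "integrable (noise s2 n) (\<lambda>v. (H v - a)\<^sup>2)"
    and "(\<integral>v. (H v - a)\<^sup>2 \<partial>noise s2 n) \<le> C"
    and "((\<integral>v. H v \<partial>noise s2 n) - a)\<^sup>2 \<le> C"
proof -
  interpret prob_space "noise s2 n" using s2 by (rule prob_space_noise)
  note star = lambda_star_moments[where G = G and thbar = thbar, OF k blk s2 n orth, folded a_def C_def]
  have a_nonneg: "0 \<le> a"
    unfolding a_def lambda_opt_def by (intro divide_nonneg_nonneg sum_nonneg) auto
  have H: "H = (\<lambda>v. max 0 (lambda_star k s2 G m thbar i n v))"
    by (simp add: H_def lambda_hat0_def[abs_def])
  note clip = clipped_mse_le[OF star(1,3) a_nonneg]
  show H_int: "integrable (noise s2 n) H" and H_mse: "integrable (noise s2 n) (\<lambda>v. (H v - a)\<^sup>2)"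
    using clip(1,2) unfolding H by simp_all
  show H_le: "(\<integral>v. (H v - a)\<^sup>2 \<partial>noise s2 n) \<le> C"
    using clip(3) star(4) unfolding H by simp
  have "((\<integral>v. H v \<partial>noise s2 n) - a)\<^sup>2 = (expectation (\<lambda>v. H v - a))\<^sup>2"
    using H_int by (simp add: prob_space)
  also have "\<dots> \<le> expectation (\<lambda>v. (H v - a)\<^sup>2)"
    using H_int H_mse by (intro power2_expectation_le) auto
  finally show "((\<integral>v. H v \<partial>noise s2 n) - a)\<^sup>2 \<le> C"
    using H_le by simp
qed

lemma LIMSEQ_inverse_linear_plus_quadratic:
  "(\<lambda>n. a / (b * real n) + c / (real n)\<^sup>2) \<longlonglongrightarrow> (0::real)"
proof -
  have "(\<lambda>n. a / b * inverse (real n) + c * (inverse (real n))\<^sup>2) \<longlonglongrightarrow> a / b * 0 + c * 0\<^sup>2"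
    by (intro tendsto_intros lim_inverse_n)
  then show ?thesis
    by (simp add: divide_inverse power_inverse mult.assoc)
qed

lemma LIMSEQ_of_power2_diff_le:
  fixes f g :: "nat \<Rightarrow> real"
  assumes "eventually (\<lambda>n. (f n - a)\<^sup>2 \<le> g n) sequentially" and "g \<longlonglongrightarrow> 0"
  shows "f \<longlonglongrightarrow> a"
proof -
  have "(\<lambda>n. (f n - a)\<^sup>2) \<longlonglongrightarrow> 0"
    by (rule tendsto_sandwich[OF _ assms(1) tendsto_const assms(2)]) simp
  then have "(\<lambda>n. sqrt ((f n - a)\<^sup>2)) \<longlonglongrightarrow> sqrt 0"
    by (rule tendsto_real_sqrt)
  then have "(\<lambda>n. \<bar>f n - a\<bar>) \<longlonglongrightarrow> 0"
    by simp
  then show ?thesis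
    by (simp add: tendsto_rabs_zero_iff LIM_zero_iff)
qed

theorem corollary10:
  fixes p m :: nat and k :: "nat \<Rightarrow> nat" and sigma2 :: real
    and thbar :: "nat \<Rightarrow> real" and G :: "nat \<Rightarrow> nat \<Rightarrow> nat \<Rightarrow> real"
  assumes k_pos: "\<And>i. i < p \<Longrightarrow> 0 < k i"
    and m_def: "m = (\<Sum>i<p. k i)"
    and sigma_pos: "0 < sigma2"
    and orth: "\<And>n c c'. m \<le> n \<Longrightarrow> c < m \<Longrightarrow> c' < m \<Longrightarrow>
                 (\<Sum>j<n. G n j c * G n j c') = (if c = c' then real n else 0)"
    and i_lt: "i < p"
  shows "(\<forall>n\<ge>m. integrable (noise sigma2 n) (lambda_star k sigma2 G m thbar i n)
            \<and> (\<integral>v. lambda_star k sigma2 G m thbar i n v \<partial>noise sigma2 n) = lambda_opt k thbar i)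
       \<and> (\<lambda>n. \<integral>v. lambda_hat0 k sigma2 G m thbar i n v \<partial>noise sigma2 n)
            \<longlonglongrightarrow> lambda_opt k thbar i
       \<and> (\<forall>n\<ge>m. integrable (noise sigma2 n)
               (\<lambda>v. (lambda_star k sigma2 G m thbar i n v - lambda_opt k thbar i)\<^sup>2))
       \<and> (\<lambda>n. \<integral>v. (lambda_star k sigma2 G m thbar i n v - lambda_opt k thbar i)\<^sup>2 \<partial>noise sigma2 n)
            \<longlonglongrightarrow> 0
       \<and> (\<forall>n\<ge>m. integrable (noise sigma2 n) (lambda_hat0 k sigma2 G m thbar i n)
            \<and> integrable (noise sigma2 n)
               (\<lambda>v. (lambda_hat0 k sigma2 G m thbar i n v - lambda_opt k thbar i)\<^sup>2))
       \<and> (\<lambda>n. \<integral>v. (lambda_hat0 k sigma2 G m thbar i n v - lambda_opt k thbar i)\<^sup>2 \<partial>noise sigma2 n)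
            \<longlonglongrightarrow> 0"
proof -
  define C where "C n = 12 * (\<Sum>c\<in>blk k i. (thbar c)\<^sup>2) * sigma2 / (real (k i) * real n)
    + 12 * sigma2\<^sup>2 / (real n)\<^sup>2" for n
  have k: "0 < k i" using i_lt by (rule k_pos)
  have blk: "blk k i \<subseteq> {..<m}" unfolding m_def using i_lt by (rule blk_subset_lessThan)
  have n_pos: "0 < n" if "m \<le> n" for n
    using that k member_le_sum[of i "{..<p}" k] i_lt unfolding m_def by simp
  note star = lambda_star_moments[where G = G and thbar = thbar,
      OF k blk sigma_pos n_pos orth, folded C_def]
  note hat = lambda_hat0_moments[where G = G and thbar = thbar,
      OF k blk sigma_pos n_pos orth, folded C_def]
  have C: "C \<longlonglongrightarrow> 0" unfolding C_def by (rule LIMSEQ_inverse_linear_plus_quadratic)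
  have ev: "eventually (\<lambda>n. m \<le> n) sequentially" by (rule eventually_ge_at_top)
  have star_mse: "(\<lambda>n. \<integral>v. (lambda_star k sigma2 G m thbar i n v - lambda_opt k thbar i)\<^sup>2 \<partial>noise sigma2 n)
      \<longlonglongrightarrow> 0"
    by (rule tendsto_sandwich[OF _ _ tendsto_const C])
       (auto intro: always_eventually eventually_mono[OF ev star(4)])
  have hat_mse: "(\<lambda>n. \<integral>v. (lambda_hat0 k sigma2 G m thbar i n v - lambda_opt k thbar i)\<^sup>2 \<partial>noise sigma2 n)
      \<longlonglongrightarrow> 0"
    by (rule tendsto_sandwich[OF _ _ tendsto_const C])
       (auto intro: always_eventually eventually_mono[OF ev hat(3)])
  have hat_mean: "(\<lambda>n. \<integral>v. lambda_hat0 k sigma2 G m thbar i n v \<partial>noise sigma2 n) \<longlonglongrightarrow> lambda_opt k thbar i"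
    by (rule LIMSEQ_of_power2_diff_le[OF _ C]) (rule eventually_mono[OF ev hat(4)])
  show ?thesis
    using star(1-3) hat(1,2) star_mse hat_mse hat_mean by blast
qed

end
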